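(* Let $(X_1,\dots,X_d)$ be a $d$-dimensional $1$-Meixner random vector with $E[X_i]=0$ for all $i$, and let real numbers $\alpha_{i,j,k}$, $\beta_{i,j}$ satisfy $[U_i,X_j]=\sum_{k=1}^d\alpha_{i,j,k}X_k+\beta_{i,j}I$ for all $i,j$. Put $A:=\max\{|\alpha_{i,j,k}|:1\le i,j,k\le d\}$, $B:=\max\{|\beta_{i,j}|:1\le i,j\le d\}$ and $K:=\max\{dA+B,1\}$. Then for every multi-index $\mathbf i=(i_1,\dots,i_d)\in(\mathbb N\cup\{0\})^d$, $$\big|E[X^{\mathbf i}]\big|\le K^{|\mathbf i|}\,|\mathbf i|!\qquad\text{and}\qquad E\big[|X^{\mathbf i}|\big]\le(2K)^{|\mathbf i|}\,|\mathbf i|!,$$ where $|\mathbf i|=i_1+\cdots+i_d$ and $X^{\mathbf i}=X_1^{i_1}\cdots X_d^{i_d}$.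
   Context: Let $X_1,\dots,X_d$ be real random variables on $(\Omega,\mathcal F,P)$ with finite moments of all orders. $F$ is the space of polynomial random variables $f(X_1,\dots,X_d)$ (complex coefficients), $F_n$ those of degree $\le n$, $G_0=F_0$, $G_n=F_n\ominus F_{n-1}$ in $L^2(P)$. For $f\in G_n$, $X_if\in G_{n-1}\oplus G_n\oplus G_{n+1}$; its components define $a^-(i)f,a^0(i)f,a^+(i)f$ respectively, extended linearly to $F$. $U_i:=a^-(i)+\tfrac12a^0(i)$. $(X_1,\dots,X_d)$ is a $d$-dimensional $1$-Meixner random vector if there are reals $\alpha_{i,j,k},\beta_{i,j}$ with $[U_i,X_j]=\sum_k\alpha_{i,j,k}X_k+\beta_{i,j}I$ on $F$ for all $i,j$ (with $X_j$ the multiplication operator, $I$ the identity). *)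

theory Defs
  imports "HOL-Probability.Probability"
begin

text \<open>Random variables are indexed 0..d-1 (the paper's 1..d). Multi-indices are
functions nat => nat, of which only the values at 0..d-1 matter.\<close>

definition pmono :: "(nat \<Rightarrow> 'a \<Rightarrow> real) \<Rightarrow> nat \<Rightarrow> (nat \<Rightarrow> nat) \<Rightarrow> 'a \<Rightarrow> complex" where
  "pmono X d k \<omega> = (\<Prod>i<d. complex_of_real (X i \<omega>) ^ k i)"

definition multi_idx :: "nat \<Rightarrow> nat \<Rightarrow> (nat \<Rightarrow> nat) set" where
  "multi_idx d n = {k. (\<forall>i\<ge>d. k i = 0) \<and> (\<Sum>i<d. k i) \<le> n}"

definition polyF :: "(nat \<Rightarrow> 'a \<Rightarrow> real) \<Rightarrow> nat \<Rightarrow> nat \<Rightarrow> ('a \<Rightarrow> complex) set" where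
  "polyF X d n = {f. \<exists>c. f = (\<lambda>\<omega>. \<Sum>k\<in>multi_idx d n. c k * pmono X d k \<omega>)}"

definition polyAll :: "(nat \<Rightarrow> 'a \<Rightarrow> real) \<Rightarrow> nat \<Rightarrow> ('a \<Rightarrow> complex) set" where
  "polyAll X d = (\<Union>n. polyF X d n)"

definition linner :: "'a measure \<Rightarrow> ('a \<Rightarrow> complex) \<Rightarrow> ('a \<Rightarrow> complex) \<Rightarrow> complex" where
  "linner M f g = (\<integral>\<omega>. f \<omega> * cnj (g \<omega>) \<partial>M)"

definition polyG :: "'a measure \<Rightarrow> (nat \<Rightarrow> 'a \<Rightarrow> real) \<Rightarrow> nat \<Rightarrow> nat \<Rightarrow> ('a \<Rightarrow> complex) set" where
  "polyG M X d n = (if n = 0 then polyF X d 0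
     else {f \<in> polyF X d n. \<forall>g \<in> polyF X d (n - 1). linner M f g = 0})"

text \<open>Orthogonal projection onto G_n (a representative; unique up to P-null sets).
For f in F this is the G_n-component of f in F = direct sum of the G_n.\<close>
definition projG :: "'a measure \<Rightarrow> (nat \<Rightarrow> 'a \<Rightarrow> real) \<Rightarrow> nat \<Rightarrow> nat \<Rightarrow> ('a \<Rightarrow> complex) \<Rightarrow> ('a \<Rightarrow> complex)" where
  "projG M X d n f = (SOME g. g \<in> polyG M X d n \<and>
      (\<forall>h \<in> polyG M X d n. linner M (\<lambda>\<omega>. f \<omega> - g \<omega>) h = 0))"

definition pdeg :: "(nat \<Rightarrow> 'a \<Rightarrow> real) \<Rightarrow> nat \<Rightarrow> ('a \<Rightarrow> complex) \<Rightarrow> nat" where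
  "pdeg X d f = (LEAST n. f \<in> polyF X d n)"

text \<open>a^-(i) and a^0(i), extended linearly: for f in G_n, a^-(i) f is the G_{n-1}
component of X_i f and a^0(i) f its G_n component.\<close>
definition aminus :: "'a measure \<Rightarrow> (nat \<Rightarrow> 'a \<Rightarrow> real) \<Rightarrow> nat \<Rightarrow> nat \<Rightarrow> ('a \<Rightarrow> complex) \<Rightarrow> ('a \<Rightarrow> complex)" where
  "aminus M X d i f = (\<lambda>\<omega>. \<Sum>n\<in>{1..pdeg X d f}.
      projG M X d (n - 1) (\<lambda>\<omega>'. complex_of_real (X i \<omega>') * projG M X d n f \<omega>') \<omega>)"

definition azero :: "'a measure \<Rightarrow> (nat \<Rightarrow> 'a \<Rightarrow> real) \<Rightarrow> nat \<Rightarrow> nat \<Rightarrow> ('a \<Rightarrow> complex) \<Rightarrow> ('a \<Rightarrow> complex)" where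
  "azero M X d i f = (\<lambda>\<omega>. \<Sum>n\<in>{..pdeg X d f}.
      projG M X d n (\<lambda>\<omega>'. complex_of_real (X i \<omega>') * projG M X d n f \<omega>') \<omega>)"

definition Uop :: "'a measure \<Rightarrow> (nat \<Rightarrow> 'a \<Rightarrow> real) \<Rightarrow> nat \<Rightarrow> nat \<Rightarrow> ('a \<Rightarrow> complex) \<Rightarrow> ('a \<Rightarrow> complex)" where
  "Uop M X d i f = (\<lambda>\<omega>. aminus M X d i f \<omega> + azero M X d i f \<omega> / 2)"

definition meixner_comm :: "'a measure \<Rightarrow> (nat \<Rightarrow> 'a \<Rightarrow> real) \<Rightarrow> nat \<Rightarrow>
    (nat \<Rightarrow> nat \<Rightarrow> nat \<Rightarrow> real) \<Rightarrow> (nat \<Rightarrow> nat \<Rightarrow> real) \<Rightarrow> bool" where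
  "meixner_comm M X d \<alpha> \<beta> \<longleftrightarrow> (\<forall>i<d. \<forall>j<d. \<forall>f \<in> polyAll X d.
     AE \<omega> in M. Uop M X d i (\<lambda>\<omega>'. complex_of_real (X j \<omega>') * f \<omega>') \<omega>
                 - complex_of_real (X j \<omega>) * Uop M X d i f \<omega>
               = complex_of_real (\<Sum>k<d. \<alpha> i j k * X k \<omega>) * f \<omega>
                 + complex_of_real (\<beta> i j) * f \<omega>)"

definition one_meixner :: "'a measure \<Rightarrow> (nat \<Rightarrow> 'a \<Rightarrow> real) \<Rightarrow> nat \<Rightarrow> bool" where
  "one_meixner M X d \<longleftrightarrow> (\<exists>\<alpha> \<beta>. meixner_comm M X d \<alpha> \<beta>)"

end

theory Submission
  imports Defs
begin

text \<open>
  Since every X_i is centred, the constant component of X_i f comes only from a^-(i) f, so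
  E[X_i f] = E[U_i f] for every polynomial f; moreover U_i 1 = 0. Moving U_i through a word
  X_j1 ... X_jn with the commutation relation therefore writes E[X_i X_j1 ... X_jn] as a sum
  of n terms, each an (alpha, beta)-combination of moments of words of length n and n - 1,
  and induction on the length gives the bound K^n n!. The bound for E|X^i| follows from
  (E|Y|)^2 <= E[Y^2], applied to the monomial with doubled exponents, and
  (2n)! <= 4^n (n!)^2.
\<close>

lemma power_add_le_two_power:
  fixes a b :: real
  assumes "0 \<le> a" "0 \<le> b"
  shows "(a + b) ^ n \<le> 2 ^ n * (a ^ n + b ^ n)"
proof -
  have "(a + b) ^ n \<le> (2 * max a b) ^ n" using assms by (intro power_mono) auto
  also have "\<dots> = 2 ^ n * max a b ^ n" by (simp add: power_mult_distrib)
  also have "max a b ^ n \<le> a ^ n + b ^ n" using assms by (cases "a \<le> b") (auto simp: max_def)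
  finally show ?thesis by simp
qed

lemma fact_double_le: "(fact (2 * n) :: real) \<le> 4 ^ n * fact n ^ 2"
proof -
  have "fact (2 * n) = fact n * fact n * (2 * n choose n)"
    using binomial_fact_lemma[of n "2 * n"] by simp
  also have "(2 * n choose n) \<le> (4::nat) ^ n"
    using binomial_le_pow2[of "2 * n" n] by (simp add: power_mult)
  finally have "fact (2 * n) \<le> fact n * fact n * (4::nat) ^ n" by simp
  then have "real (fact (2 * n)) \<le> real (fact n * fact n * 4 ^ n)" by (rule of_nat_mono)
  then show ?thesis by (simp add: power2_eq_square algebra_simps)
qed

lemma (in prob_space) integral_abs_squared_le:
  fixes f :: "'a \<Rightarrow> real"
  assumes "integrable M f" "integrable M (\<lambda>x. f x ^ 2)"
  shows "(\<integral>x. \<bar>f x\<bar> \<partial>M) ^ 2 \<le> (\<integral>x. f x ^ 2 \<partial>M)"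
  using variance_eq[of "\<lambda>x. \<bar>f x\<bar>"] variance_positive[of "\<lambda>x. \<bar>f x\<bar>"] assms by simp

lemma norm_sum_mult_add_le:
  fixes a :: "nat \<Rightarrow> real" and z :: "nat \<Rightarrow> complex"
  assumes "\<And>k. k < d \<Longrightarrow> \<bar>a k\<bar> \<le> A" "\<And>k. k < d \<Longrightarrow> cmod (z k) \<le> T"
    and "\<bar>b\<bar> \<le> B" "cmod w \<le> T"
  shows "cmod ((\<Sum>k<d. complex_of_real (a k) * z k) + complex_of_real b * w) \<le> (real d * A + B) * T"
proof -
  have "cmod ((\<Sum>k<d. complex_of_real (a k) * z k) + complex_of_real b * w)
      \<le> (\<Sum>k<d. cmod (complex_of_real (a k) * z k)) + cmod (complex_of_real b * w)"
    by (rule order_trans[OF norm_triangle_ineq add_right_mono[OF norm_sum]])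
  also have "\<dots> = (\<Sum>k<d. \<bar>a k\<bar> * cmod (z k)) + \<bar>b\<bar> * cmod w"
    by (simp add: norm_mult)
  also have "\<dots> \<le> (\<Sum>k<d. A * T) + B * T"
    using assms by (intro add_mono sum_mono mult_mono) (auto intro: order_trans[OF abs_ge_zero])
  also have "\<dots> = (real d * A + B) * T" by (simp add: algebra_simps)
  finally show ?thesis .
qed

section \<open>Polynomial random variables\<close>

lemma multi_idx_finite: "finite (multi_idx d n)"
proof (rule finite_subset)
  show "multi_idx d n \<subseteq> {k. \<forall>x. (x \<in> {..<d} \<longrightarrow> k x \<in> {..n}) \<and> (x \<notin> {..<d} \<longrightarrow> k x = 0)}"
  proof
    fix k assume k: "k \<in> multi_idx d n"
    have "k x \<le> n" if "x < d" for x
      using k member_le_sum[of x "{..<d}" k] that by (simp add: multi_idx_def)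
    then show "k \<in> {k. \<forall>x. (x \<in> {..<d} \<longrightarrow> k x \<in> {..n}) \<and> (x \<notin> {..<d} \<longrightarrow> k x = 0)}"
      using k by (auto simp: multi_idx_def)
  qed
qed (rule finite_set_of_finite_funs; simp)

lemma multi_idx_zero: "multi_idx d 0 = {\<lambda>_. 0}"
  by (auto simp: multi_idx_def fun_eq_iff) (metis leI lessThan_iff)

lemma polyF_zero: "polyF X d 0 = {f. \<exists>c. f = (\<lambda>_. c)}"
  by (auto simp: polyF_def multi_idx_zero pmono_def)

lemma const_one_in_polyF: "(\<lambda>_. 1) \<in> polyF X d 0"
  by (auto simp: polyF_zero)

lemma pmono_fun_upd_Suc:
  assumes "j < d"
  shows "pmono X d (k(j := Suc (k j))) \<omega> = complex_of_real (X j \<omega>) * pmono X d k \<omega>"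
proof -
  have "pmono X d (k(j := Suc (k j))) \<omega>
      = (\<Prod>i<d. complex_of_real (X i \<omega>) ^ k i * (if i = j then complex_of_real (X i \<omega>) else 1))"
    unfolding pmono_def by (intro prod.cong) auto
  also have "\<dots> = pmono X d k \<omega> * complex_of_real (X j \<omega>)"
    unfolding prod.distrib pmono_def using assms by (simp add: prod.delta)
  finally show ?thesis by simp
qed

lemma X_mult_in_polyF:
  assumes "j < d" "f \<in> polyF X d n"
  shows "(\<lambda>\<omega>. complex_of_real (X j \<omega>) * f \<omega>) \<in> polyF X d (Suc n)"
proof -
  obtain c where f: "f = (\<lambda>\<omega>. \<Sum>k\<in>multi_idx d n. c k * pmono X d k \<omega>)"
    using assms(2) by (auto simp: polyF_def)
  define S where "S = multi_idx d n"
  define sh where "sh k = k(j := Suc (k j))" for k :: "nat \<Rightarrow> nat"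
  have inj: "inj_on sh S" unfolding sh_def inj_on_def by (auto simp: fun_eq_iff)
  have sub: "sh ` S \<subseteq> multi_idx d (Suc n)"
  proof
    fix m assume "m \<in> sh ` S"
    then obtain k where k: "k \<in> S" "m = sh k" by auto
    have "(\<Sum>i<d. m i) = (\<Sum>i<d. k i + (if i = j then 1 else 0))"
      unfolding k sh_def by (intro sum.cong) auto
    also have "\<dots> = (\<Sum>i<d. k i) + 1" using assms(1) by (simp add: sum.distrib)
    finally show "m \<in> multi_idx d (Suc n)"
      using k assms(1) unfolding S_def sh_def multi_idx_def by auto
  qed
  define c' where "c' m = (if m \<in> sh ` S then c (inv_into S sh m) else 0)" for m
  have c'_sh: "c' (sh k) = c k" if "k \<in> S" for k
    using inj that by (simp add: c'_def inv_into_f_f)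
  have "complex_of_real (X j \<omega>) * f \<omega> = (\<Sum>m\<in>multi_idx d (Suc n). c' m * pmono X d m \<omega>)" for \<omega>
  proof -
    have "(\<Sum>m\<in>multi_idx d (Suc n). c' m * pmono X d m \<omega>) = (\<Sum>m\<in>sh ` S. c' m * pmono X d m \<omega>)"
      using sub multi_idx_finite by (intro sum.mono_neutral_right) (auto simp: c'_def)
    also have "\<dots> = (\<Sum>k\<in>S. c' (sh k) * pmono X d (sh k) \<omega>)"
      using inj by (simp add: sum.reindex)
    also have "\<dots> = (\<Sum>k\<in>S. complex_of_real (X j \<omega>) * (c k * pmono X d k \<omega>))"
    proof (rule sum.cong[OF refl])
      fix k assume "k \<in> S"
      then show "c' (sh k) * pmono X d (sh k) \<omega> = complex_of_real (X j \<omega>) * (c k * pmono X d k \<omega>)"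
        unfolding c'_sh[OF \<open>k \<in> S\<close>] using assms(1) by (simp add: sh_def pmono_fun_upd_Suc)
    qed
    finally show ?thesis by (simp add: f S_def sum_distrib_left)
  qed
  then show ?thesis by (auto simp: polyF_def)
qed

lemma X_in_polyF_1: "j < d \<Longrightarrow> (\<lambda>\<omega>. complex_of_real (X j \<omega>)) \<in> polyF X d 1"
  using X_mult_in_polyF[OF _ const_one_in_polyF, of j d X] by simp

lemma polyF_mono:
  assumes "n \<le> m" "f \<in> polyF X d n"
  shows "f \<in> polyF X d m"
proof -
  obtain c where f: "f = (\<lambda>\<omega>. \<Sum>k\<in>multi_idx d n. c k * pmono X d k \<omega>)"
    using assms(2) by (auto simp: polyF_def)
  have "multi_idx d n \<subseteq> multi_idx d m" using assms(1) by (auto simp: multi_idx_def)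
  then have "f = (\<lambda>\<omega>. \<Sum>k\<in>multi_idx d m. (if k \<in> multi_idx d n then c k else 0) * pmono X d k \<omega>)"
    unfolding f using multi_idx_finite by (intro ext sum.mono_neutral_cong_left) auto
  then show ?thesis by (auto simp: polyF_def)
qed

lemma diff_in_polyF:
  assumes "f \<in> polyF X d n" "g \<in> polyF X d n"
  shows "(\<lambda>\<omega>. f \<omega> - g \<omega>) \<in> polyF X d n"
proof -
  obtain c c' where "f = (\<lambda>\<omega>. \<Sum>k\<in>multi_idx d n. c k * pmono X d k \<omega>)"
    and "g = (\<lambda>\<omega>. \<Sum>k\<in>multi_idx d n. c' k * pmono X d k \<omega>)"
    using assms by (auto simp: polyF_def)
  then have "(\<lambda>\<omega>. f \<omega> - g \<omega>) = (\<lambda>\<omega>. \<Sum>k\<in>multi_idx d n. (c k - c' k) * pmono X d k \<omega>)"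
    by (simp add: sum_subtractf left_diff_distrib)
  then show ?thesis by (auto simp: polyF_def)
qed

definition word_prod :: "(nat \<Rightarrow> 'a \<Rightarrow> real) \<Rightarrow> nat list \<Rightarrow> 'a \<Rightarrow> complex" where
  "word_prod X js \<omega> = (\<Prod>j\<leftarrow>js. complex_of_real (X j \<omega>))"

lemma word_prod_Nil [simp]: "word_prod X [] \<omega> = 1"
  and word_prod_Cons [simp]: "word_prod X (j # js) \<omega> = complex_of_real (X j \<omega>) * word_prod X js \<omega>"
  and word_prod_append [simp]: "word_prod X (js @ ks) \<omega> = word_prod X js \<omega> * word_prod X ks \<omega>"
  by (simp_all add: word_prod_def)

lemma word_prod_in_polyF: "set js \<subseteq> {..<d} \<Longrightarrow> word_prod X js \<in> polyF X d (length js)"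
proof (induction js)
  case Nil
  then show ?case using const_one_in_polyF by (simp add: word_prod_def)
next
  case (Cons j js)
  then have "(\<lambda>\<omega>. complex_of_real (X j \<omega>) * word_prod X js \<omega>) \<in> polyF X d (Suc (length js))"
    by (intro X_mult_in_polyF) auto
  then show ?case by (simp add: word_prod_def)
qed

lemma word_prod_in_polyAll: "set js \<subseteq> {..<d} \<Longrightarrow> word_prod X js \<in> polyAll X d"
  unfolding polyAll_def using word_prod_in_polyF by blast

definition index_word :: "(nat \<Rightarrow> nat) \<Rightarrow> nat \<Rightarrow> nat list" where
  "index_word ii e = concat (map (\<lambda>k. replicate (ii k) k) [0..<e])"

lemma index_word_Suc: "index_word ii (Suc e) = index_word ii e @ replicate (ii e) e"
  by (simp add: index_word_def)

lemma length_index_word: "length (index_word ii e) = (\<Sum>k<e. ii k)"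
  by (induction e) (simp_all add: index_word_Suc, simp add: index_word_def)

lemma set_index_word: "set (index_word ii e) \<subseteq> {..<e}"
  by (auto simp: index_word_def)

lemma word_prod_index_word:
  "word_prod X (index_word ii e) = (\<lambda>\<omega>. complex_of_real (\<Prod>k<e. X k \<omega> ^ ii k))"
proof (induction e)
  case 0
  then show ?case by (simp add: index_word_def fun_eq_iff)
next
  case (Suc e)
  then show ?case by (simp add: index_word_Suc word_prod_def prod_list_replicate fun_eq_iff)
qed

section \<open>Polynomially bounded functions\<close>

locale finite_moments = prob_space M for M :: "'a measure" +
  fixes X :: "nat \<Rightarrow> 'a \<Rightarrow> real" and d :: nat
  assumes X_measurable: "\<And>k. k < d \<Longrightarrow> X k \<in> borel_measurable M"
    and integrable_abs_X_power: "\<And>k n. k < d \<Longrightarrow> integrable M (\<lambda>\<omega>. \<bar>X k \<omega>\<bar> ^ n)"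
begin

definition envelope :: "'a \<Rightarrow> real" where
  "envelope \<omega> = 1 + (\<Sum>i<d. \<bar>X i \<omega>\<bar>)"

lemma envelope_ge_1: "1 \<le> envelope \<omega>"
  unfolding envelope_def by (simp add: sum_nonneg)

lemma integrable_envelope_power: "integrable M (\<lambda>\<omega>. envelope \<omega> ^ N)"
proof -
  have "integrable M (\<lambda>\<omega>. (1 + (\<Sum>i<e. \<bar>X i \<omega>\<bar>)) ^ N)" if "e \<le> d" for e
    using that
  proof (induction e arbitrary: N)
    case 0
    then show ?case by simp
  next
    case (Suc e)
    let ?S = "\<lambda>\<omega>. 1 + (\<Sum>i<e. \<bar>X i \<omega>\<bar>)"
    have int: "integrable M (\<lambda>\<omega>. 2 ^ N * (?S \<omega> ^ N + \<bar>X e \<omega>\<bar> ^ N))"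
      using Suc integrable_abs_X_power[of e] by (intro integrable_mult_right Bochner_Integration.integrable_add) auto
    have meas: "(\<lambda>\<omega>. (?S \<omega> + \<bar>X e \<omega>\<bar>) ^ N) \<in> borel_measurable M"
      using Suc.prems by (intro borel_measurable_power borel_measurable_add borel_measurable_sum)
        (auto intro!: X_measurable borel_measurable_abs)
    have "integrable M (\<lambda>\<omega>. (?S \<omega> + \<bar>X e \<omega>\<bar>) ^ N)"
    proof (rule Bochner_Integration.integrable_bound[OF int meas], rule AE_I2)
      fix \<omega>
      have "(?S \<omega> + \<bar>X e \<omega>\<bar>) ^ N \<le> 2 ^ N * (?S \<omega> ^ N + \<bar>X e \<omega>\<bar> ^ N)"
        by (rule power_add_le_two_power) (auto simp: sum_nonneg)
      then show "norm ((?S \<omega> + \<bar>X e \<omega>\<bar>) ^ N) \<le> norm (2 ^ N * (?S \<omega> ^ N + \<bar>X e \<omega>\<bar> ^ N))"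
        by (simp add: sum_nonneg)
    qed
    then show ?case by (simp add: add.assoc)
  qed
  then show ?thesis unfolding envelope_def by simp
qed

lemma integrable_if_envelope_bounded:
  fixes f :: "'a \<Rightarrow> 'b::{banach,second_countable_topology}"
  assumes "f \<in> borel_measurable M" "\<forall>\<omega>\<in>space M. norm (f \<omega>) \<le> C * envelope \<omega> ^ N"
  shows "integrable M f"
proof (rule Bochner_Integration.integrable_bound[OF _ assms(1)])
  show "integrable M (\<lambda>\<omega>. C * envelope \<omega> ^ N)"
    by (intro integrable_mult_right integrable_envelope_power)
  show "AE \<omega> in M. norm (f \<omega>) \<le> norm (C * envelope \<omega> ^ N)"
    using assms(2) by (intro AE_I2) (auto intro: order_trans[OF _ abs_ge_self])
qed

text \<open>Since linner is a Bochner integral, and hence 0 for non-integrable products, the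
  L^2 arguments take place in this algebra of integrable functions; it contains all
  polynomials in the X_k because all absolute moments are finite.\<close>
definition poly_bounded :: "('a \<Rightarrow> complex) \<Rightarrow> bool" where
  "poly_bounded f \<longleftrightarrow> f \<in> borel_measurable M \<and>
     (\<exists>C N. \<forall>\<omega>\<in>space M. cmod (f \<omega>) \<le> C * envelope \<omega> ^ N)"

lemma integrable_poly_bounded: "poly_bounded f \<Longrightarrow> integrable M f"
  unfolding poly_bounded_def using integrable_if_envelope_bounded by blast

lemma envelope_bound_mono:
  assumes "cmod z \<le> C * envelope \<omega> ^ N" "N \<le> N'"
  shows "cmod z \<le> \<bar>C\<bar> * envelope \<omega> ^ N'"
proof -
  have "C * envelope \<omega> ^ N \<le> \<bar>C\<bar> * envelope \<omega> ^ N"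
    using envelope_ge_1[of \<omega>] by (intro mult_right_mono) auto
  also have "\<dots> \<le> \<bar>C\<bar> * envelope \<omega> ^ N'"
    using envelope_ge_1[of \<omega>] assms(2) by (intro mult_left_mono power_increasing) auto
  finally show ?thesis using assms(1) by linarith
qed

lemma poly_bounded_add:
  assumes "poly_bounded f" "poly_bounded g"
  shows "poly_bounded (\<lambda>\<omega>. f \<omega> + g \<omega>)"
proof -
  obtain C N C' N' where f: "\<forall>\<omega>\<in>space M. cmod (f \<omega>) \<le> C * envelope \<omega> ^ N"
    and g: "\<forall>\<omega>\<in>space M. cmod (g \<omega>) \<le> C' * envelope \<omega> ^ N'"
    using assms by (auto simp: poly_bounded_def)
  have "cmod (f \<omega> + g \<omega>) \<le> (\<bar>C\<bar> + \<bar>C'\<bar>) * envelope \<omega> ^ max N N'" if "\<omega> \<in> space M" for \<omega>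
    using norm_triangle_ineq[of "f \<omega>" "g \<omega>"] that f g
      envelope_bound_mono[of "f \<omega>" C \<omega> N "max N N'"] envelope_bound_mono[of "g \<omega>" C' \<omega> N' "max N N'"]
    by (simp add: distrib_right)
  then show ?thesis using assms unfolding poly_bounded_def by (blast intro: borel_measurable_add)
qed

lemma poly_bounded_mult:
  assumes "poly_bounded f" "poly_bounded g"
  shows "poly_bounded (\<lambda>\<omega>. f \<omega> * g \<omega>)"
proof -
  obtain C N C' N' where f: "\<forall>\<omega>\<in>space M. cmod (f \<omega>) \<le> C * envelope \<omega> ^ N"
    and g: "\<forall>\<omega>\<in>space M. cmod (g \<omega>) \<le> C' * envelope \<omega> ^ N'"
    using assms by (auto simp: poly_bounded_def)
  have "cmod (f \<omega> * g \<omega>) \<le> (C * envelope \<omega> ^ N) * (C' * envelope \<omega> ^ N')" if "\<omega> \<in> space M" for \<omega>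
    unfolding norm_mult using f g that by (intro mult_mono) (auto intro: order_trans[OF norm_ge_zero])
  then have "\<forall>\<omega>\<in>space M. cmod (f \<omega> * g \<omega>) \<le> (C * C') * envelope \<omega> ^ (N + N')"
    by (simp add: power_add ac_simps)
  then show ?thesis using assms unfolding poly_bounded_def by (blast intro: borel_measurable_times)
qed

lemma poly_bounded_const: "poly_bounded (\<lambda>_. c)"
  unfolding poly_bounded_def by (intro conjI borel_measurable_const exI[of _ "cmod c"] exI[of _ 0]) simp

lemma poly_bounded_X:
  assumes "j < d"
  shows "poly_bounded (\<lambda>\<omega>. complex_of_real (X j \<omega>))"
proof -
  have "(\<lambda>\<omega>. complex_of_real (X j \<omega>)) \<in> borel_measurable M"
    using X_measurable[OF assms] by (rule borel_measurable_continuous_on[OF continuous_on_of_real_id])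
  moreover have "cmod (complex_of_real (X j \<omega>)) \<le> 1 * envelope \<omega> ^ 1" for \<omega>
    using member_le_sum[of j "{..<d}" "\<lambda>i. \<bar>X i \<omega>\<bar>"] assms by (simp add: envelope_def)
  ultimately show ?thesis unfolding poly_bounded_def by blast
qed

lemma poly_bounded_cnj: "poly_bounded f \<Longrightarrow> poly_bounded (\<lambda>\<omega>. cnj (f \<omega>))"
  unfolding poly_bounded_def
  using borel_measurable_continuous_on[OF continuous_on_cnj[OF continuous_on_id]] by auto

lemma poly_bounded_cmult: "poly_bounded f \<Longrightarrow> poly_bounded (\<lambda>\<omega>. c * f \<omega>)"
  using poly_bounded_mult[OF poly_bounded_const] by blast

lemma poly_bounded_diff: "poly_bounded f \<Longrightarrow> poly_bounded g \<Longrightarrow> poly_bounded (\<lambda>\<omega>. f \<omega> - g \<omega>)"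
  using poly_bounded_add[OF _ poly_bounded_cmult[of g "-1"]] by simp

lemma poly_bounded_sum:
  "(\<And>k. k \<in> I \<Longrightarrow> poly_bounded (\<phi> k)) \<Longrightarrow> poly_bounded (\<lambda>\<omega>. \<Sum>k\<in>I. \<phi> k \<omega>)"
  by (induction I rule: infinite_finite_induct) (simp_all add: poly_bounded_const poly_bounded_add)

lemma poly_bounded_prod:
  "(\<And>k. k \<in> I \<Longrightarrow> poly_bounded (\<phi> k)) \<Longrightarrow> poly_bounded (\<lambda>\<omega>. \<Prod>k\<in>I. \<phi> k \<omega>)"
  by (induction I rule: infinite_finite_induct) (simp_all add: poly_bounded_const poly_bounded_mult)

lemma poly_bounded_power: "poly_bounded f \<Longrightarrow> poly_bounded (\<lambda>\<omega>. f \<omega> ^ n)"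
  by (induction n) (simp_all add: poly_bounded_const poly_bounded_mult)

lemma poly_bounded_pmono: "poly_bounded (pmono X d k)"
  unfolding pmono_def by (auto intro!: poly_bounded_prod poly_bounded_power poly_bounded_X)

lemma poly_bounded_polyF: "f \<in> polyF X d n \<Longrightarrow> poly_bounded f"
  unfolding polyF_def by (auto intro!: poly_bounded_sum poly_bounded_cmult poly_bounded_pmono)

lemma poly_bounded_polyAll: "f \<in> polyAll X d \<Longrightarrow> poly_bounded f"
  unfolding polyAll_def by (auto intro: poly_bounded_polyF)

definition moment :: "nat list \<Rightarrow> complex" where
  "moment js = (\<integral>\<omega>. word_prod X js \<omega> \<partial>M)"

lemma moment_Nil: "moment [] = 1"
  by (simp add: moment_def prob_space)

lemma moment_index_word: "moment (index_word ii d) = complex_of_real (\<integral>\<omega>. (\<Prod>k<d. X k \<omega> ^ ii k) \<partial>M)"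
  unfolding moment_def word_prod_index_word by (rule integral_complex_of_real)

lemma integrable_monomial: "integrable M (\<lambda>\<omega>. \<Prod>k<d. X k \<omega> ^ ii k)"
proof -
  have "integrable M (word_prod X (index_word ii d))"
    by (rule integrable_poly_bounded[OF poly_bounded_polyF[OF word_prod_in_polyF[OF set_index_word]]])
  then show ?thesis unfolding word_prod_index_word complex_of_real_integrable_eq .
qed

section \<open>Orthogonal projections\<close>

lemma integrable_linner:
  "poly_bounded f \<Longrightarrow> poly_bounded g \<Longrightarrow> integrable M (\<lambda>\<omega>. f \<omega> * cnj (g \<omega>))"
  by (intro integrable_poly_bounded poly_bounded_mult poly_bounded_cnj)

lemma linner_add_left:
  "poly_bounded f \<Longrightarrow> poly_bounded g \<Longrightarrow> poly_bounded h \<Longrightarrow>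
    linner M (\<lambda>\<omega>. f \<omega> + g \<omega>) h = linner M f h + linner M g h"
  unfolding linner_def using integrable_linner[of f h] integrable_linner[of g h]
  by (simp add: distrib_right)

lemma linner_diff_left:
  "poly_bounded f \<Longrightarrow> poly_bounded g \<Longrightarrow> poly_bounded h \<Longrightarrow>
    linner M (\<lambda>\<omega>. f \<omega> - g \<omega>) h = linner M f h - linner M g h"
  unfolding linner_def using integrable_linner[of f h] integrable_linner[of g h]
  by (simp add: left_diff_distrib)

lemma linner_cmult_left: "linner M (\<lambda>\<omega>. c * f \<omega>) h = c * linner M f h"
  unfolding linner_def by (simp add: mult.assoc)

lemma linner_commute: "linner M g f = cnj (linner M f g)"
proof -
  have "cnj (linner M f g) = (\<integral>\<omega>. cnj (f \<omega> * cnj (g \<omega>)) \<partial>M)"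
    unfolding linner_def by (rule Bochner_Integration.integral_cnj[symmetric])
  then show ?thesis unfolding linner_def by (simp add: mult.commute)
qed

lemma linner_add_right:
  "poly_bounded f \<Longrightarrow> poly_bounded g \<Longrightarrow> poly_bounded h \<Longrightarrow>
    linner M h (\<lambda>\<omega>. f \<omega> + g \<omega>) = linner M h f + linner M h g"
  by (subst (1 2 3) linner_commute) (simp add: linner_add_left)

lemma linner_sum_right:
  assumes "finite I" "\<And>k. k \<in> I \<Longrightarrow> poly_bounded (\<phi> k)" "poly_bounded h"
  shows "linner M h (\<lambda>\<omega>. \<Sum>k\<in>I. c k * \<phi> k \<omega>) = (\<Sum>k\<in>I. cnj (c k) * linner M h (\<phi> k))"
proof -
  have "linner M h (\<lambda>\<omega>. \<Sum>k\<in>I. c k * \<phi> k \<omega>) = (\<integral>\<omega>. (\<Sum>k\<in>I. cnj (c k) * (h \<omega> * cnj (\<phi> k \<omega>))) \<partial>M)"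
    unfolding linner_def by (simp add: sum_distrib_left ac_simps)
  also have "\<dots> = (\<Sum>k\<in>I. cnj (c k) * linner M h (\<phi> k))"
    unfolding linner_def using assms
    by (subst Bochner_Integration.integral_sum) (auto intro!: integrable_mult_right integrable_linner)
  finally show ?thesis .
qed

lemma linner_eq_0_if_self_eq_0:
  assumes "poly_bounded r" "poly_bounded u" "linner M u u = 0"
  shows "linner M r u = 0"
proof -
  have sq: "u \<omega> * cnj (u \<omega>) = complex_of_real (cmod (u \<omega>) ^ 2)" for \<omega>
    by (rule complex_norm_square[symmetric])
  have int: "integrable M (\<lambda>\<omega>. cmod (u \<omega>) ^ 2)"
    using integrable_norm[OF integrable_linner[OF assms(2,2)]] by (simp add: norm_mult power2_eq_square)
  have "linner M u u = complex_of_real (\<integral>\<omega>. cmod (u \<omega>) ^ 2 \<partial>M)"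
    unfolding linner_def sq by (rule integral_complex_of_real)
  then have "(\<integral>\<omega>. cmod (u \<omega>) ^ 2 \<partial>M) = 0"
    using assms(3) by simp
  then have "AE \<omega> in M. cmod (u \<omega>) ^ 2 = 0"
    using int by (subst (asm) integral_nonneg_eq_0_iff_AE) auto
  then have "AE \<omega> in M. r \<omega> * cnj (u \<omega>) = 0"
    by eventually_elim simp
  then show ?thesis
    unfolding linner_def by (simp add: integral_eq_zero_AE)
qed

lemma orthogonal_correction_exists:
  assumes "poly_bounded r" "poly_bounded u"
  shows "\<exists>t. linner M (\<lambda>\<omega>. r \<omega> - t * u \<omega>) u = 0"
proof (cases "linner M u u = 0")
  case True
  then show ?thesis using linner_eq_0_if_self_eq_0[OF assms True] by (intro exI[of _ 0]) simp
next
  case False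
  define t where "t = linner M r u / linner M u u"
  have "linner M (\<lambda>\<omega>. r \<omega> - t * u \<omega>) u = linner M r u - t * linner M u u"
    using assms by (simp add: linner_diff_left poly_bounded_cmult linner_cmult_left)
  also have "\<dots> = 0"
    using False by (simp add: t_def)
  finally show ?thesis ..
qed

lemma finite_span_projection_exists:
  assumes "finite I" "\<And>k. k \<in> I \<Longrightarrow> poly_bounded (\<phi> k)" "poly_bounded f"
  shows "\<exists>c. \<forall>l\<in>I. linner M (\<lambda>\<omega>. f \<omega> - (\<Sum>k\<in>I. c k * \<phi> k \<omega>)) (\<phi> l) = 0"
  using assms
proof (induction I arbitrary: f rule: finite_induct)
  case empty
  then show ?case by simp
next
  case (insert a I)
  have \<phi>I: "\<And>k. k \<in> I \<Longrightarrow> poly_bounded (\<phi> k)" and \<phi>a: "poly_bounded (\<phi> a)"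
    using insert.prems by auto
  obtain cf where cf: "\<forall>l\<in>I. linner M (\<lambda>\<omega>. f \<omega> - (\<Sum>k\<in>I. cf k * \<phi> k \<omega>)) (\<phi> l) = 0"
    using insert.IH[OF \<phi>I insert.prems(2)] by blast
  obtain ca where ca: "\<forall>l\<in>I. linner M (\<lambda>\<omega>. \<phi> a \<omega> - (\<Sum>k\<in>I. ca k * \<phi> k \<omega>)) (\<phi> l) = 0"
    using insert.IH[OF \<phi>I \<phi>a] by blast
  define r where "r \<omega> = f \<omega> - (\<Sum>k\<in>I. cf k * \<phi> k \<omega>)" for \<omega>
  define u where "u \<omega> = \<phi> a \<omega> - (\<Sum>k\<in>I. ca k * \<phi> k \<omega>)" for \<omega>
  have span: "poly_bounded (\<lambda>\<omega>. \<Sum>k\<in>I. ca k * \<phi> k \<omega>)"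
    using \<phi>I by (intro poly_bounded_sum poly_bounded_cmult)
  have ru: "poly_bounded r" "poly_bounded u"
    unfolding r_def u_def using \<phi>I \<phi>a insert.prems(2) span
    by (auto intro!: poly_bounded_diff poly_bounded_sum poly_bounded_cmult)
  (* r and u are orthogonal to the span of I; removing the u-component of r makes it
     orthogonal to \<phi> a as well *)
  obtain t where t: "linner M (\<lambda>\<omega>. r \<omega> - t * u \<omega>) u = 0"
    using orthogonal_correction_exists[OF ru] by blast
  define e where "e \<omega> = r \<omega> - t * u \<omega>" for \<omega>
  have e: "poly_bounded e" unfolding e_def using ru by (intro poly_bounded_diff poly_bounded_cmult)
  have e_I: "linner M e (\<phi> l) = 0" if "l \<in> I" for l
    using cf ca that \<phi>I ru unfolding e_def r_def[symmetric] u_def[symmetric]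
    by (simp add: linner_diff_left poly_bounded_cmult linner_cmult_left)
  have "linner M e (\<phi> a) = linner M e u + linner M e (\<lambda>\<omega>. \<Sum>k\<in>I. ca k * \<phi> k \<omega>)"
    using linner_add_right[OF ru(2) span e] by (simp add: u_def)
  also have "\<dots> = 0"
    using t e_I by (simp add: e_def[symmetric] linner_sum_right[OF insert.hyps(1) \<phi>I e])
  finally have e_a: "linner M e (\<phi> a) = 0" .
  define c where "c k = (if k = a then t else cf k - t * ca k)" for k
  have "f \<omega> - (\<Sum>k\<in>insert a I. c k * \<phi> k \<omega>) = e \<omega>" for \<omega>
  proof -
    have "(\<Sum>k\<in>I. c k * \<phi> k \<omega>) = (\<Sum>k\<in>I. cf k * \<phi> k \<omega> - t * (ca k * \<phi> k \<omega>))"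
      using insert.hyps(2) by (intro sum.cong) (auto simp: c_def algebra_simps)
    also have "\<dots> = (\<Sum>k\<in>I. cf k * \<phi> k \<omega>) - t * (\<Sum>k\<in>I. ca k * \<phi> k \<omega>)"
      by (simp add: sum_subtractf sum_distrib_left)
    finally show ?thesis using insert.hyps by (simp add: c_def e_def r_def u_def algebra_simps)
  qed
  then show ?case using e_I e_a by (intro exI[of _ c]) simp
qed

lemma polyF_projection_exists:
  assumes "poly_bounded h"
  shows "\<exists>g\<in>polyF X d n. \<forall>q\<in>polyF X d n. linner M (\<lambda>\<omega>. h \<omega> - g \<omega>) q = 0"
proof -
  obtain c where c: "\<forall>l\<in>multi_idx d n.
      linner M (\<lambda>\<omega>. h \<omega> - (\<Sum>k\<in>multi_idx d n. c k * pmono X d k \<omega>)) (pmono X d l) = 0"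
    using finite_span_projection_exists[of "multi_idx d n" "pmono X d" h]
      multi_idx_finite poly_bounded_pmono assms by blast
  define g where "g \<omega> = (\<Sum>k\<in>multi_idx d n. c k * pmono X d k \<omega>)" for \<omega>
  have g: "g \<in> polyF X d n" unfolding g_def[abs_def] polyF_def by blast
  have res: "poly_bounded (\<lambda>\<omega>. h \<omega> - g \<omega>)"
    using assms poly_bounded_polyF[OF g] by (rule poly_bounded_diff)
  have orth: "\<forall>l\<in>multi_idx d n. linner M (\<lambda>\<omega>. h \<omega> - g \<omega>) (pmono X d l) = 0"
    using c by (simp add: g_def)
  have "linner M (\<lambda>\<omega>. h \<omega> - g \<omega>) q = 0" if q_poly: "q \<in> polyF X d n" for q
  proof -
    obtain c' where q: "q = (\<lambda>\<omega>. \<Sum>k\<in>multi_idx d n. c' k * pmono X d k \<omega>)"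
      using q_poly by (auto simp: polyF_def)
    show ?thesis unfolding q using orth
      by (simp add: linner_sum_right multi_idx_finite poly_bounded_pmono res)
  qed
  then show ?thesis using g by blast
qed

lemma polyG_projection_exists:
  assumes "poly_bounded h"
  shows "\<exists>g. g \<in> polyG M X d n \<and> (\<forall>q \<in> polyG M X d n. linner M (\<lambda>\<omega>. h \<omega> - g \<omega>) q = 0)"
proof (cases "n = 0")
  case True
  then show ?thesis using polyF_projection_exists[OF assms, of 0] by (auto simp: polyG_def)
next
  case False
  obtain g1 where g1: "g1 \<in> polyF X d n" "\<forall>q\<in>polyF X d n. linner M (\<lambda>\<omega>. h \<omega> - g1 \<omega>) q = 0"
    using polyF_projection_exists[OF assms] by blast
  obtain g0 where g0: "g0 \<in> polyF X d (n - 1)" "\<forall>q\<in>polyF X d (n - 1). linner M (\<lambda>\<omega>. h \<omega> - g0 \<omega>) q = 0"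
    using polyF_projection_exists[OF assms] by blast
  have g0_n: "g0 \<in> polyF X d n" using polyF_mono[OF _ g0(1)] by simp
  have r0: "poly_bounded (\<lambda>\<omega>. h \<omega> - g0 \<omega>)" and r1: "poly_bounded (\<lambda>\<omega>. h \<omega> - g1 \<omega>)"
    using assms g0(1) g1(1) by (auto intro: poly_bounded_diff poly_bounded_polyF)
  (* the projection onto G_n is the difference of those onto F_n and F_(n-1) *)
  define g where "g \<omega> = g1 \<omega> - g0 \<omega>" for \<omega>
  have g_eq: "g = (\<lambda>\<omega>. (h \<omega> - g0 \<omega>) - (h \<omega> - g1 \<omega>))" and res_eq: "(\<lambda>\<omega>. h \<omega> - g \<omega>) = (\<lambda>\<omega>. (h \<omega> - g1 \<omega>) + g0 \<omega>)"
    by (auto simp: g_def)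
  have "linner M g q = 0" if q: "q \<in> polyF X d (n - 1)" for q
  proof -
    have "linner M g q = linner M (\<lambda>\<omega>. h \<omega> - g0 \<omega>) q - linner M (\<lambda>\<omega>. h \<omega> - g1 \<omega>) q"
      unfolding g_eq by (rule linner_diff_left[OF r0 r1 poly_bounded_polyF[OF q]])
    then show ?thesis using g0(2) g1(2) q polyF_mono[OF _ q, of n] by simp
  qed
  then have g: "g \<in> polyG M X d n"
    using False diff_in_polyF[OF g1(1) g0_n] by (simp add: polyG_def g_def[abs_def])
  have "linner M (\<lambda>\<omega>. h \<omega> - g \<omega>) q = 0" if "q \<in> polyG M X d n" for q
  proof -
    have q: "q \<in> polyF X d n" "linner M q g0 = 0"
      using that g0(1) False by (auto simp: polyG_def)
    then show ?thesis using g1(2) g0(1)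
      by (simp add: res_eq linner_add_left r1 poly_bounded_polyF linner_commute[of g0 q])
  qed
  with g show ?thesis by blast
qed

lemma projG_in_polyG: "poly_bounded h \<Longrightarrow> projG M X d n h \<in> polyG M X d n"
  and projG_orthogonal: "poly_bounded h \<Longrightarrow> q \<in> polyG M X d n \<Longrightarrow>
    linner M (\<lambda>\<omega>. h \<omega> - projG M X d n h \<omega>) q = 0"
  using someI_ex[OF polyG_projection_exists[of h n]] unfolding projG_def by blast+

lemma polyG_subset_polyF: "polyG M X d n \<subseteq> polyF X d n"
  by (auto simp: polyG_def)

lemma projG_in_polyF: "poly_bounded h \<Longrightarrow> projG M X d n h \<in> polyF X d n"
  using projG_in_polyG polyG_subset_polyF by blast

lemma poly_bounded_projG: "poly_bounded h \<Longrightarrow> poly_bounded (projG M X d n h)"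
  using projG_in_polyF poly_bounded_polyF by blast

lemma projG_zero_const: "poly_bounded h \<Longrightarrow> \<exists>c. projG M X d 0 h = (\<lambda>_. c)"
  using projG_in_polyF[of h 0] by (simp add: polyF_zero)

lemma integral_projG:
  assumes "poly_bounded h"
  shows "(\<integral>\<omega>. projG M X d n h \<omega> \<partial>M) = (if n = 0 then (\<integral>\<omega>. h \<omega> \<partial>M) else 0)"
proof (cases "n = 0")
  case True
  have "(\<lambda>_. 1) \<in> polyG M X d 0" by (simp add: polyG_def const_one_in_polyF)
  then have "(\<integral>\<omega>. h \<omega> - projG M X d 0 h \<omega> \<partial>M) = 0"
    using projG_orthogonal[OF assms] by (force simp: linner_def)
  then show ?thesis
    using True integrable_poly_bounded[OF assms] integrable_poly_bounded[OF poly_bounded_projG[OF assms]]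
    by simp
next
  case False
  have "(\<lambda>_. 1) \<in> polyF X d (n - 1)" using polyF_mono[OF _ const_one_in_polyF] by simp
  then show ?thesis
    using projG_in_polyG[OF assms, of n] False by (auto simp: polyG_def linner_def)
qed

end

section \<open>The mean of U_i\<close>

locale centered_moments = finite_moments +
  assumes integral_X_zero: "\<And>k. k < d \<Longrightarrow> (\<integral>\<omega>. X k \<omega> \<partial>M) = 0"
begin

lemma integral_X_mult_const: "i < d \<Longrightarrow> (\<integral>\<omega>. complex_of_real (X i \<omega>) * c \<partial>M) = 0"
  using integral_X_zero[of i] by (simp add: integral_complex_of_real)

lemma X_in_polyG_1: "i < d \<Longrightarrow> (\<lambda>\<omega>. complex_of_real (X i \<omega>)) \<in> polyG M X d 1"
  using integral_X_mult_const X_in_polyF_1 by (auto simp: polyG_def polyF_zero linner_def)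

lemma integral_X_mult_projG_1:
  assumes "i < d" "poly_bounded f"
  shows "(\<integral>\<omega>. complex_of_real (X i \<omega>) * projG M X d 1 f \<omega> \<partial>M) = (\<integral>\<omega>. complex_of_real (X i \<omega>) * f \<omega> \<partial>M)"
proof -
  have "linner M (\<lambda>\<omega>. f \<omega> - projG M X d 1 f \<omega>) (\<lambda>\<omega>. complex_of_real (X i \<omega>)) = 0"
    using projG_orthogonal[OF assms(2) X_in_polyG_1[OF assms(1)]] .
  moreover have "integrable M (\<lambda>\<omega>. complex_of_real (X i \<omega>) * f \<omega>)"
    "integrable M (\<lambda>\<omega>. complex_of_real (X i \<omega>) * projG M X d 1 f \<omega>)"
    using assms by (auto intro!: integrable_poly_bounded poly_bounded_mult poly_bounded_X poly_bounded_projG)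
  ultimately show ?thesis
    unfolding linner_def by (simp add: algebra_simps)
qed

lemma pdeg_in_polyF: "f \<in> polyAll X d \<Longrightarrow> f \<in> polyF X d (pdeg X d f)"
  unfolding pdeg_def polyAll_def by (auto intro: LeastI)

lemma poly_bounded_aminus: "poly_bounded f \<Longrightarrow> i < d \<Longrightarrow> poly_bounded (aminus M X d i f)"
  and poly_bounded_azero: "poly_bounded f \<Longrightarrow> i < d \<Longrightarrow> poly_bounded (azero M X d i f)"
  unfolding aminus_def azero_def
  by (intro poly_bounded_sum poly_bounded_projG poly_bounded_mult poly_bounded_X; assumption)+

lemma poly_bounded_Uop: "poly_bounded f \<Longrightarrow> i < d \<Longrightarrow> poly_bounded (Uop M X d i f)"
  unfolding Uop_def using poly_bounded_cmult[of "azero M X d i f" "1 / 2"]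
  by (simp add: poly_bounded_add poly_bounded_aminus poly_bounded_azero)

text \<open>Only the summand n = 0 can contribute, and it vanishes because the G_0-projection
  of f is constant and X_i is centred.\<close>
lemma integral_azero:
  assumes "poly_bounded f" "i < d"
  shows "(\<integral>\<omega>. azero M X d i f \<omega> \<partial>M) = 0"
proof -
  define Y where "Y n \<omega> = complex_of_real (X i \<omega>) * projG M X d n f \<omega>" for n \<omega>
  have Y: "poly_bounded (Y n)" for n
    unfolding Y_def[abs_def] using assms by (intro poly_bounded_mult poly_bounded_X poly_bounded_projG)
  obtain c where c: "projG M X d 0 f = (\<lambda>_. c)" using projG_zero_const[OF assms(1)] by blast
  have "(\<integral>\<omega>. azero M X d i f \<omega> \<partial>M) = (\<Sum>n\<le>pdeg X d f. \<integral>\<omega>. projG M X d n (Y n) \<omega> \<partial>M)"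
    unfolding azero_def Y_def[symmetric]
    by (intro Bochner_Integration.integral_sum integrable_poly_bounded poly_bounded_projG Y)
  also have "\<dots> = (\<integral>\<omega>. Y 0 \<omega> \<partial>M)"
    by (simp add: integral_projG[OF Y] sum.delta)
  also have "\<dots> = 0"
    using integral_X_mult_const[OF assms(2)] by (simp add: Y_def c)
  finally show ?thesis .
qed

lemma integral_aminus:
  assumes "poly_bounded f" "i < d"
  shows "(\<integral>\<omega>. aminus M X d i f \<omega> \<partial>M) =
    (if 1 \<le> pdeg X d f then (\<integral>\<omega>. complex_of_real (X i \<omega>) * f \<omega> \<partial>M) else 0)"
proof -
  define Y where "Y n \<omega> = complex_of_real (X i \<omega>) * projG M X d n f \<omega>" for n \<omega>
  have Y: "poly_bounded (Y n)" for n
    unfolding Y_def[abs_def] using assms by (intro poly_bounded_mult poly_bounded_X poly_bounded_projG)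
  have "(\<integral>\<omega>. aminus M X d i f \<omega> \<partial>M) = (\<Sum>n\<in>{1..pdeg X d f}. \<integral>\<omega>. projG M X d (n - 1) (Y n) \<omega> \<partial>M)"
    unfolding aminus_def Y_def[symmetric]
    by (intro Bochner_Integration.integral_sum integrable_poly_bounded poly_bounded_projG Y)
  also have "\<dots> = (\<Sum>n\<in>{1..pdeg X d f}. if n = 1 then (\<integral>\<omega>. Y 1 \<omega> \<partial>M) else 0)"
    by (intro sum.cong refl) (auto simp: integral_projG[OF Y])
  also have "\<dots> = (if 1 \<le> pdeg X d f then (\<integral>\<omega>. Y 1 \<omega> \<partial>M) else 0)"
    by (simp add: sum.delta)
  finally show ?thesis
    using integral_X_mult_projG_1[OF assms(2,1)] by (simp add: Y_def[abs_def])
qed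

lemma integral_Uop:
  assumes "f \<in> polyAll X d" "i < d"
  shows "(\<integral>\<omega>. Uop M X d i f \<omega> \<partial>M) = (\<integral>\<omega>. complex_of_real (X i \<omega>) * f \<omega> \<partial>M)"
proof -
  have f: "poly_bounded f" using assms(1) by (rule poly_bounded_polyAll)
  have "(\<integral>\<omega>. Uop M X d i f \<omega> \<partial>M) = (\<integral>\<omega>. aminus M X d i f \<omega> \<partial>M) + (\<integral>\<omega>. azero M X d i f \<omega> \<partial>M) / 2"
    unfolding Uop_def using poly_bounded_aminus[OF f assms(2)] poly_bounded_azero[OF f assms(2)]
    by (simp add: integrable_poly_bounded)
  also have "\<dots> = (if 1 \<le> pdeg X d f then (\<integral>\<omega>. complex_of_real (X i \<omega>) * f \<omega> \<partial>M) else 0)"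
    by (simp add: integral_aminus[OF f assms(2)] integral_azero[OF f assms(2)])
  also have "\<dots> = (\<integral>\<omega>. complex_of_real (X i \<omega>) * f \<omega> \<partial>M)"
  proof (cases "1 \<le> pdeg X d f")
    case False
    then have "pdeg X d f = 0" by simp
    then have "f \<in> polyF X d 0" using pdeg_in_polyF[OF assms(1)] by simp
    then show ?thesis using False integral_X_mult_const[OF assms(2)] by (auto simp: polyF_zero)
  qed simp
  finally show ?thesis .
qed

lemma Uop_one: "i < d \<Longrightarrow> Uop M X d i (\<lambda>_. 1) = (\<lambda>_. 0)"
proof -
  assume i: "i < d"
  have "pdeg X d (\<lambda>_. 1) = 0" unfolding pdeg_def using const_one_in_polyF by (intro Least_eq_0)
  moreover obtain c where "projG M X d 0 (\<lambda>_. 1) = (\<lambda>_. c)"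
    using projG_zero_const[OF poly_bounded_const] by blast
  moreover obtain c' where c': "projG M X d 0 (\<lambda>\<omega>. complex_of_real (X i \<omega>) * c) = (\<lambda>_. c')"
    using projG_zero_const[OF poly_bounded_cmult[OF poly_bounded_X[OF i]]] by (auto simp: mult.commute)
  moreover have "c' = 0"
    using integral_projG[OF poly_bounded_mult[OF poly_bounded_X[OF i] poly_bounded_const], of 0 c]
      integral_X_mult_const[OF i] by (simp add: c' prob_space)
  ultimately show ?thesis by (simp add: Uop_def aminus_def azero_def)
qed

end

section \<open>The moment recursion\<close>

locale centered_meixner = centered_moments +
  fixes \<alpha> :: "nat \<Rightarrow> nat \<Rightarrow> nat \<Rightarrow> real" and \<beta> :: "nat \<Rightarrow> nat \<Rightarrow> real"
  assumes meixner: "meixner_comm M X d \<alpha> \<beta>"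
begin

definition comm_term :: "nat \<Rightarrow> nat \<Rightarrow> 'a \<Rightarrow> complex" where
  "comm_term i j \<omega> = (\<Sum>k<d. complex_of_real (\<alpha> i j k) * complex_of_real (X k \<omega>)) + complex_of_real (\<beta> i j)"

lemma poly_bounded_comm_term: "poly_bounded (comm_term i j)"
  unfolding comm_term_def[abs_def]
  by (intro poly_bounded_add poly_bounded_sum poly_bounded_cmult poly_bounded_X poly_bounded_const) auto

lemma AE_Uop_mult_X:
  assumes "f \<in> polyAll X d" "i < d" "j < d"
  shows "AE \<omega> in M. Uop M X d i (\<lambda>\<omega>'. complex_of_real (X j \<omega>') * f \<omega>') \<omega>
    = complex_of_real (X j \<omega>) * Uop M X d i f \<omega> + comm_term i j \<omega> * f \<omega>"
proof -
  have "AE \<omega> in M. Uop M X d i (\<lambda>\<omega>'. complex_of_real (X j \<omega>') * f \<omega>') \<omega>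
      - complex_of_real (X j \<omega>) * Uop M X d i f \<omega>
    = complex_of_real (\<Sum>k<d. \<alpha> i j k * X k \<omega>) * f \<omega> + complex_of_real (\<beta> i j) * f \<omega>"
    using meixner assms unfolding meixner_comm_def by blast
  then show ?thesis
    by eventually_elim (simp add: comm_term_def algebra_simps)
qed

lemma integral_mult_Uop_mult_X:
  assumes "f \<in> polyAll X d" "i < d" "j < d" "poly_bounded P"
  shows "(\<integral>\<omega>. P \<omega> * Uop M X d i (\<lambda>\<omega>'. complex_of_real (X j \<omega>') * f \<omega>') \<omega> \<partial>M)
    = (\<integral>\<omega>. P \<omega> * complex_of_real (X j \<omega>) * Uop M X d i f \<omega> \<partial>M)
      + (\<integral>\<omega>. P \<omega> * comm_term i j \<omega> * f \<omega> \<partial>M)"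
proof -
  have f: "poly_bounded f" using assms(1) by (rule poly_bounded_polyAll)
  have pb: "poly_bounded (\<lambda>\<omega>. P \<omega> * Uop M X d i (\<lambda>\<omega>'. complex_of_real (X j \<omega>') * f \<omega>') \<omega>)"
    "poly_bounded (\<lambda>\<omega>. P \<omega> * complex_of_real (X j \<omega>) * Uop M X d i f \<omega>)"
    "poly_bounded (\<lambda>\<omega>. P \<omega> * comm_term i j \<omega> * f \<omega>)"
    using assms f by (auto intro!: poly_bounded_mult poly_bounded_Uop poly_bounded_X poly_bounded_comm_term)
  have "(\<integral>\<omega>. P \<omega> * Uop M X d i (\<lambda>\<omega>'. complex_of_real (X j \<omega>') * f \<omega>') \<omega> \<partial>M)
    = (\<integral>\<omega>. P \<omega> * complex_of_real (X j \<omega>) * Uop M X d i f \<omega> + P \<omega> * comm_term i j \<omega> * f \<omega> \<partial>M)"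
    using AE_Uop_mult_X[OF assms(1-3)] pb
    by (intro integral_cong_AE) (auto simp: poly_bounded_def algebra_simps elim!: eventually_mono)
  also have "\<dots> = (\<integral>\<omega>. P \<omega> * complex_of_real (X j \<omega>) * Uop M X d i f \<omega> \<partial>M)
      + (\<integral>\<omega>. P \<omega> * comm_term i j \<omega> * f \<omega> \<partial>M)"
    using pb(2,3) by (simp add: integrable_poly_bounded)
  finally show ?thesis .
qed

text \<open>Each letter X_j of the word is commuted past U_i in turn, leaving the commutator term
  in its place; nothing remains at the end because U_i 1 = 0.\<close>
lemma integral_mult_Uop_word_prod:
  assumes "i < d" "set js \<subseteq> {..<d}" "poly_bounded P"
  shows "(\<integral>\<omega>. P \<omega> * Uop M X d i (word_prod X js) \<omega> \<partial>M) =
    (\<Sum>m<length js. \<integral>\<omega>. P \<omega> * word_prod X (take m js) \<omega> * comm_term i (js ! m) \<omega>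
                        * word_prod X (drop (Suc m) js) \<omega> \<partial>M)"
  using assms(2,3)
proof (induction js arbitrary: P)
  case Nil
  have "word_prod X [] = (\<lambda>_. 1)" by (simp add: fun_eq_iff)
  then show ?case by (simp add: Uop_one[OF assms(1)])
next
  case (Cons j js)
  have j: "j < d" and js: "set js \<subseteq> {..<d}" using Cons.prems by auto
  have PX: "poly_bounded (\<lambda>\<omega>. P \<omega> * complex_of_real (X j \<omega>))"
    using Cons.prems(2) j by (intro poly_bounded_mult poly_bounded_X)
  have "word_prod X (j # js) = (\<lambda>\<omega>. complex_of_real (X j \<omega>) * word_prod X js \<omega>)"
    by (simp add: fun_eq_iff)
  then have step: "(\<integral>\<omega>. P \<omega> * Uop M X d i (word_prod X (j # js)) \<omega> \<partial>M)
    = (\<integral>\<omega>. P \<omega> * complex_of_real (X j \<omega>) * Uop M X d i (word_prod X js) \<omega> \<partial>M)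
      + (\<integral>\<omega>. P \<omega> * comm_term i j \<omega> * word_prod X js \<omega> \<partial>M)"
    using integral_mult_Uop_mult_X[OF word_prod_in_polyAll[OF js] assms(1) j Cons.prems(2)] by simp
  show ?case
    unfolding step Cons.IH[OF js PX] length_Cons sum.lessThan_Suc_shift by (simp add: ac_simps)
qed

lemma integral_word_comm_term_word:
  assumes "set xs \<subseteq> {..<d}" "set ys \<subseteq> {..<d}"
  shows "(\<integral>\<omega>. word_prod X xs \<omega> * comm_term i j \<omega> * word_prod X ys \<omega> \<partial>M) =
    (\<Sum>k<d. complex_of_real (\<alpha> i j k) * moment (xs @ k # ys)) + complex_of_real (\<beta> i j) * moment (xs @ ys)"
proof -
  have pb: "poly_bounded (word_prod X zs)" if "set zs \<subseteq> {..<d}" for zs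
    using poly_bounded_polyF[OF word_prod_in_polyF[OF that]] .
  have "(\<lambda>\<omega>. word_prod X xs \<omega> * comm_term i j \<omega> * word_prod X ys \<omega>) =
    (\<lambda>\<omega>. (\<Sum>k<d. complex_of_real (\<alpha> i j k) * word_prod X (xs @ k # ys) \<omega>)
      + complex_of_real (\<beta> i j) * word_prod X (xs @ ys) \<omega>)"
    by (simp add: comm_term_def sum_distrib_left sum_distrib_right algebra_simps)
  then have "(\<integral>\<omega>. word_prod X xs \<omega> * comm_term i j \<omega> * word_prod X ys \<omega> \<partial>M) =
    (\<integral>\<omega>. (\<Sum>k<d. complex_of_real (\<alpha> i j k) * word_prod X (xs @ k # ys) \<omega>)
      + complex_of_real (\<beta> i j) * word_prod X (xs @ ys) \<omega> \<partial>M)"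
    by (simp only:)
  also have "\<dots> = (\<Sum>k<d. \<integral>\<omega>. complex_of_real (\<alpha> i j k) * word_prod X (xs @ k # ys) \<omega> \<partial>M)
      + (\<integral>\<omega>. complex_of_real (\<beta> i j) * word_prod X (xs @ ys) \<omega> \<partial>M)"
  proof -
    have int: "integrable M (\<lambda>\<omega>. complex_of_real (\<alpha> i j k) * word_prod X (xs @ k # ys) \<omega>)"
      if "k \<in> {..<d}" for k
      using assms that by (intro integrable_poly_bounded poly_bounded_cmult pb) auto
    have "integrable M (\<lambda>\<omega>. complex_of_real (\<beta> i j) * word_prod X (xs @ ys) \<omega>)"
      using assms by (intro integrable_poly_bounded poly_bounded_cmult pb) auto
    then have "(\<integral>\<omega>. (\<Sum>k<d. complex_of_real (\<alpha> i j k) * word_prod X (xs @ k # ys) \<omega>)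
        + complex_of_real (\<beta> i j) * word_prod X (xs @ ys) \<omega> \<partial>M)
      = (\<integral>\<omega>. (\<Sum>k<d. complex_of_real (\<alpha> i j k) * word_prod X (xs @ k # ys) \<omega>) \<partial>M)
        + (\<integral>\<omega>. complex_of_real (\<beta> i j) * word_prod X (xs @ ys) \<omega> \<partial>M)"
      by (intro Bochner_Integration.integral_add Bochner_Integration.integrable_sum int)
    also have "(\<integral>\<omega>. (\<Sum>k<d. complex_of_real (\<alpha> i j k) * word_prod X (xs @ k # ys) \<omega>) \<partial>M)
      = (\<Sum>k<d. \<integral>\<omega>. complex_of_real (\<alpha> i j k) * word_prod X (xs @ k # ys) \<omega> \<partial>M)"
      using int by (rule Bochner_Integration.integral_sum)
    finally show ?thesis .
  qed
  also have "\<dots> = (\<Sum>k<d. complex_of_real (\<alpha> i j k) * moment (xs @ k # ys))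
      + complex_of_real (\<beta> i j) * moment (xs @ ys)"
    by (simp add: moment_def)
  finally show ?thesis .
qed

lemma moment_Cons:
  assumes "i < d" "set js \<subseteq> {..<d}"
  shows "moment (i # js) = (\<Sum>m<length js.
    (\<Sum>k<d. complex_of_real (\<alpha> i (js ! m) k) * moment (take m js @ k # drop (Suc m) js))
      + complex_of_real (\<beta> i (js ! m)) * moment (take m js @ drop (Suc m) js))"
    (is "_ = ?rhs")
proof -
  have "moment (i # js) = (\<integral>\<omega>. 1 * Uop M X d i (word_prod X js) \<omega> \<partial>M)"
    using integral_Uop[OF word_prod_in_polyAll[OF assms(2)] assms(1)] by (simp add: moment_def)
  also have "\<dots> = (\<Sum>m<length js. \<integral>\<omega>. 1 * word_prod X (take m js) \<omega> * comm_term i (js ! m) \<omega>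
                        * word_prod X (drop (Suc m) js) \<omega> \<partial>M)"
    by (rule integral_mult_Uop_word_prod[OF assms poly_bounded_const])
  also have "\<dots> = ?rhs"
    using order_trans[OF set_take_subset assms(2)] order_trans[OF set_drop_subset assms(2)]
    by (simp add: integral_word_comm_term_word)
  finally show ?thesis .
qed


section \<open>Moment bounds\<close>

context
  fixes A B :: real
  assumes \<alpha>_bound: "\<And>i j k. i < d \<Longrightarrow> j < d \<Longrightarrow> k < d \<Longrightarrow> \<bar>\<alpha> i j k\<bar> \<le> A"
    and \<beta>_bound: "\<And>i j. i < d \<Longrightarrow> j < d \<Longrightarrow> \<bar>\<beta> i j\<bar> \<le> B"
begin

lemma norm_moment_Cons_le:
  assumes "i < d" "set js \<subseteq> {..<d}"
    and shorter: "\<And>ks. set ks \<subseteq> {..<d} \<Longrightarrow> length ks \<le> length js \<Longrightarrow> cmod (moment ks) \<le> T"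
  shows "cmod (moment (i # js)) \<le> real (length js) * ((real d * A + B) * T)"
proof -
  have sub: "set (take m js) \<subseteq> {..<d}" "set (drop (Suc m) js) \<subseteq> {..<d}" for m
    using assms(2) by (auto dest: in_set_takeD in_set_dropD)
  have summand: "cmod ((\<Sum>k<d. complex_of_real (\<alpha> i (js ! m) k) * moment (take m js @ k # drop (Suc m) js))
        + complex_of_real (\<beta> i (js ! m)) * moment (take m js @ drop (Suc m) js))
      \<le> (real d * A + B) * T" if "m < length js" for m
  proof (rule norm_sum_mult_add_le)
    have "js ! m < d" using assms(2) that nth_mem by fastforce
    then show "\<And>k. k < d \<Longrightarrow> \<bar>\<alpha> i (js ! m) k\<bar> \<le> A" "\<bar>\<beta> i (js ! m)\<bar> \<le> B"
      using \<alpha>_bound \<beta>_bound assms(1) by auto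
    show "\<And>k. k < d \<Longrightarrow> cmod (moment (take m js @ k # drop (Suc m) js)) \<le> T"
      "cmod (moment (take m js @ drop (Suc m) js)) \<le> T"
      using sub[of m] that by (auto intro!: shorter)
  qed
  have "cmod (moment (i # js)) \<le> (\<Sum>m<length js. (real d * A + B) * T)"
    unfolding moment_Cons[OF assms(1,2)]
    by (rule order_trans[OF norm_sum sum_mono]) (use summand in auto)
  then show ?thesis by simp
qed

context
  fixes K :: real
  assumes K_ge: "real d * A + B \<le> K" and K_ge_1: "1 \<le> K"
begin

lemma norm_moment_le:
  assumes "set js \<subseteq> {..<d}"
  shows "cmod (moment js) \<le> K ^ length js * fact (length js)"
  using assms
proof (induction "length js" arbitrary: js rule: less_induct)
  case less
  show ?case
  proof (cases js)
    case Nil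
    then show ?thesis by (simp add: moment_Nil)
  next
    case (Cons i rest)
    define n where "n = length rest"
    define T where "T = K ^ n * fact n"
    have T: "0 \<le> T" unfolding T_def using K_ge_1 by simp
    have "cmod (moment ks) \<le> T" if "set ks \<subseteq> {..<d}" "length ks \<le> n" for ks
    proof -
      have "cmod (moment ks) \<le> K ^ length ks * fact (length ks)"
        using less.hyps[of ks] that Cons n_def by simp
      also have "\<dots> \<le> T"
        unfolding T_def using K_ge_1 that(2) by (intro mult_mono power_increasing fact_mono) auto
      finally show ?thesis .
    qed
    then have "cmod (moment js) \<le> real n * ((real d * A + B) * T)"
      unfolding Cons n_def using less.prems Cons by (intro norm_moment_Cons_le) auto
    also have "\<dots> \<le> real n * (K * T)"
      using K_ge T by (simp add: mult_left_mono mult_right_mono)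
    also have "\<dots> \<le> real (Suc n) * K * T"
      using mult_nonneg_nonneg[OF _ T, of K] K_ge_1 by (simp add: ring_distribs mult.assoc)
    also have "\<dots> = K ^ length js * fact (length js)"
      unfolding Cons T_def n_def by (simp add: algebra_simps)
    finally show ?thesis .
  qed
qed

lemma abs_integral_monomial_le:
  "\<bar>\<integral>\<omega>. (\<Prod>k<d. X k \<omega> ^ ii k) \<partial>M\<bar> \<le> K ^ (\<Sum>k<d. ii k) * fact (\<Sum>k<d. ii k)"
  using norm_moment_le[OF set_index_word[of ii d]] by (simp add: moment_index_word length_index_word)

lemma integral_abs_monomial_le:
  "(\<integral>\<omega>. \<bar>\<Prod>k<d. X k \<omega> ^ ii k\<bar> \<partial>M) \<le> (2 * K) ^ (\<Sum>k<d. ii k) * fact (\<Sum>k<d. ii k)"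
proof -
  define n where "n = (\<Sum>k<d. ii k)"
  define Y where "Y \<omega> = (\<Prod>k<d. X k \<omega> ^ ii k)" for \<omega>
  have Y2: "(\<lambda>\<omega>. Y \<omega> ^ 2) = (\<lambda>\<omega>. \<Prod>k<d. X k \<omega> ^ (2 * ii k))"
    by (simp add: Y_def fun_eq_iff power_mult prod_power_distrib[symmetric] mult.commute)
  have "integrable M Y"
    unfolding Y_def[abs_def] by (rule integrable_monomial)
  moreover have "integrable M (\<lambda>\<omega>. Y \<omega> ^ 2)"
    unfolding Y2 by (rule integrable_monomial)
  ultimately have "(\<integral>\<omega>. \<bar>Y \<omega>\<bar> \<partial>M) ^ 2 \<le> (\<integral>\<omega>. Y \<omega> ^ 2 \<partial>M)"
    by (rule integral_abs_squared_le)
  also have "\<dots> \<le> K ^ (2 * n) * fact (2 * n)"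
    using abs_integral_monomial_le[of "\<lambda>k. 2 * ii k"] by (simp add: Y2 n_def sum_distrib_left)
  also have "\<dots> \<le> K ^ (2 * n) * (4 ^ n * fact n ^ 2)"
    using K_ge_1 fact_double_le[of n] by (intro mult_left_mono) auto
  also have "\<dots> = ((2 * K) ^ n * fact n) ^ 2"
  proof -
    have "(4::real) ^ n = (2 ^ n) ^ 2" "K ^ (2 * n) = (K ^ n) ^ 2"
      by (simp add: power2_eq_square flip: power_mult_distrib, rule power_even_eq)
    then show ?thesis by (simp add: power_mult_distrib)
  qed
  finally have "(\<integral>\<omega>. \<bar>Y \<omega>\<bar> \<partial>M) ^ 2 \<le> ((2 * K) ^ n * fact n) ^ 2" .
  then have "(\<integral>\<omega>. \<bar>Y \<omega>\<bar> \<partial>M) \<le> (2 * K) ^ n * fact n"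
    by (rule power2_le_imp_le) (use K_ge_1 in simp)
  then show ?thesis unfolding Y_def n_def .
qed

end

end

end

theorem mainTheorem4:
  fixes M :: "'a measure" and X :: "nat \<Rightarrow> 'a \<Rightarrow> real" and d :: nat
    and \<alpha> :: "nat \<Rightarrow> nat \<Rightarrow> nat \<Rightarrow> real" and \<beta> :: "nat \<Rightarrow> nat \<Rightarrow> real"
    and ii :: "nat \<Rightarrow> nat"
  assumes "prob_space M"
    and "\<And>k. k < d \<Longrightarrow> X k \<in> borel_measurable M"
    and "\<And>k n. k < d \<Longrightarrow> integrable M (\<lambda>\<omega>. \<bar>X k \<omega>\<bar> ^ n)"
    and "one_meixner M X d"
    and "\<And>k. k < d \<Longrightarrow> (\<integral>\<omega>. X k \<omega> \<partial>M) = 0"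
    and "meixner_comm M X d \<alpha> \<beta>"
  defines "A \<equiv> Max {\<bar>\<alpha> i j k\<bar> | i j k. i < d \<and> j < d \<and> k < d}"
    and "B \<equiv> Max {\<bar>\<beta> i j\<bar> | i j. i < d \<and> j < d}"
  defines "K \<equiv> max (real d * A + B) 1"
  shows "\<bar>\<integral>\<omega>. (\<Prod>k<d. X k \<omega> ^ ii k) \<partial>M\<bar> \<le> K ^ (\<Sum>k<d. ii k) * fact (\<Sum>k<d. ii k)
    \<and> (\<integral>\<omega>. \<bar>\<Prod>k<d. X k \<omega> ^ ii k\<bar> \<partial>M) \<le> (2 * K) ^ (\<Sum>k<d. ii k) * fact (\<Sum>k<d. ii k)"
proof -
  interpret centered_meixner M X d \<alpha> \<beta>
    unfolding centered_meixner_def centered_meixner_axioms_def centered_moments_def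
      centered_moments_axioms_def finite_moments_def finite_moments_axioms_def
    using assms(1-3,5,6) by blast
  have "finite {\<bar>\<alpha> i j k\<bar> | i j k. i < d \<and> j < d \<and> k < d}"
    by (rule finite_subset[of _ "(\<lambda>(i, j, k). \<bar>\<alpha> i j k\<bar>) ` ({..<d} \<times> {..<d} \<times> {..<d})"]) (force, auto)
  moreover have "finite {\<bar>\<beta> i j\<bar> | i j. i < d \<and> j < d}"
    by (rule finite_subset[of _ "(\<lambda>(i, j). \<bar>\<beta> i j\<bar>) ` ({..<d} \<times> {..<d})"]) (force, auto)
  ultimately have \<alpha>_bound: "\<And>i j k. i < d \<Longrightarrow> j < d \<Longrightarrow> k < d \<Longrightarrow> \<bar>\<alpha> i j k\<bar> \<le> A"
    and \<beta>_bound: "\<And>i j. i < d \<Longrightarrow> j < d \<Longrightarrow> \<bar>\<beta> i j\<bar> \<le> B"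
    unfolding A_def B_def by (blast intro: Max_ge)+
  have "real d * A + B \<le> K" "1 \<le> K" unfolding K_def by auto
  then show ?thesis
    using abs_integral_monomial_le[OF \<alpha>_bound \<beta>_bound] integral_abs_monomial_le[OF \<alpha>_bound \<beta>_bound]
    by blast
qed

end
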